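(* Let $m\ge1$ hypotheses be tested, of which $m_0\ge1$ are true nulls, with mutually independent p-values $p_1,\dots,p_m\in[0,1)$, the null p-values being i.i.d. $U[0,1]$. Define the estimator $$\tilde m_0\equiv 2-\sum_{i=1}^m\log(1-p_i).$$ Then the modified step-up BH procedure with estimator $\tilde m_0$ and parameter $q\in(0,1]$ controls the FDR at level $\le q$, i.e. $E[V/R^+]\le q$.
   Context: The modified step-up BH procedure with estimator $\tilde m_0$ and level $q$: set $\gamma_i=iq/\tilde m_0$, sort the p-values $p_{(1)}\le\dots\le p_{(m)}$, let $R=\max\{i:p_{(i)}\le\gamma_i\}$ and reject the hypotheses with p-values $p_{(1)},\dots,p_{(R)}$ ($R=0$ if no such $i$). $V$ is the number of rejected true null hypotheses, $R^+=\max(R,1)$, and $FDR=E[V/R^+]$ (with $V/R^+=0$ when $R=0$). *)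

theory Defs
  imports "HOL-Probability.Probability"
begin

text \<open>Hypotheses are indexed by 1..m; a realisation of the p-values is a function
  p :: nat => real (only the values on 1..m matter).\<close>

definition pord :: "(nat \<Rightarrow> real) \<Rightarrow> nat \<Rightarrow> nat \<Rightarrow> real" where
  "pord p m k = sort (map p [1..<m+1]) ! (k - 1)"

definition m0_tilde :: "(nat \<Rightarrow> real) \<Rightarrow> nat \<Rightarrow> real" where
  "m0_tilde p m = 2 - (\<Sum>i=1..m. ln (1 - p i))"

definition bh_R :: "(nat \<Rightarrow> real) \<Rightarrow> nat \<Rightarrow> real \<Rightarrow> nat" where
  "bh_R p m q = Max ({0} \<union> {i \<in> {1..m}. pord p m i \<le> real i * q / m0_tilde p m})"

definition bh_rejected :: "(nat \<Rightarrow> real) \<Rightarrow> nat \<Rightarrow> real \<Rightarrow> nat set" where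
  "bh_rejected p m q = {i \<in> {1..m}. 0 < bh_R p m q \<and> p i \<le> pord p m (bh_R p m q)}"

text \<open>False discovery proportion V / R^+, with N the set of true nulls.\<close>
definition fdp :: "(nat \<Rightarrow> real) \<Rightarrow> nat \<Rightarrow> nat set \<Rightarrow> real \<Rightarrow> real" where
  "fdp p m N q = real (card (bh_rejected p m q \<inter> N)) / real (max (bh_R p m q) 1)"

end

theory Submission
  imports Defs "HOL-Real_Asymp.Real_Asymp"
begin

text \<open>
  Let \<open>m0_i = 2 - (\<Sum>l\<noteq>i. ln (1 - p l))\<close> be the estimator without \<open>p i\<close>, so \<open>m0_i \<le> m0_tilde\<close>.
  A rejected true null \<open>i\<close> has \<open>p i \<le> R q / m0_i\<close>, hence \<open>V / R^+\<close> is at most the sum over the true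
  nulls \<open>i\<close> of \<open>[p i \<le> R q / m0_i] / R^+\<close>. Raising one p-value can only lower \<open>R\<close>; so, for fixed
  other p-values, the values of \<open>p i\<close> where the \<open>i\<close>-th term is nonzero lie in \<open>[0, R0 q / m0_i]\<close>,
  where \<open>R0\<close> is the least value of \<open>R\<close> among them, and integrating out the uniform \<open>p i\<close> gives at
  most \<open>q / m0_i\<close>. For the other true nulls \<open>l\<close> the scores \<open>-ln (1 - p l)\<close> are i.i.d. Exp(1), so
  \<open>m0_i \<ge> 2 + G\<close> with \<open>G\<close> Gamma(\<open>|N| - 1\<close>)-distributed, and
  \<open>E[1 / (2 + G)] = \<integral>\<^sub>0\<^sup>\<infinity> exp (-2t) (1 + t) ^ -(|N| - 1) dt \<le> 1 / |N|\<close>.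
  Summing over the \<open>|N|\<close> true nulls gives \<open>FDR \<le> q\<close>.
\<close>

section \<open>Order statistics and the step-up rank\<close>

definition count_le :: "(nat \<Rightarrow> real) \<Rightarrow> nat \<Rightarrow> real \<Rightarrow> nat" where
  "count_le x m t = card {l \<in> {1..m}. x l \<le> t}"

lemma sorted_nth_le_iff_less_length_filter:
  fixes ys :: "'a::linorder list"
  assumes "sorted ys" and "j < length ys"
  shows "ys ! j \<le> t \<longleftrightarrow> j < length (filter (\<lambda>v. v \<le> t) ys)"
proof
  assume "ys ! j \<le> t"
  then have "{..j} \<subseteq> {i. i < length ys \<and> ys ! i \<le> t}"
    using assms by (auto intro: order_trans[OF sorted_nth_mono])
  from card_mono[OF _ this] show "j < length (filter (\<lambda>v. v \<le> t) ys)"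
    by (simp add: length_filter_conv_card)
next
  assume j: "j < length (filter (\<lambda>v. v \<le> t) ys)"
  show "ys ! j \<le> t"
  proof (rule ccontr)
    assume "\<not> ys ! j \<le> t"
    then have "{i. i < length ys \<and> ys ! i \<le> t} \<subseteq> {..<j}"
      using assms sorted_nth_mono[OF assms(1)] by (force simp: not_less[symmetric])
    from card_mono[OF _ this] show False
      using j by (simp add: length_filter_conv_card)
  qed
qed

lemma length_filter_map_upt:
  "length (filter P (map x [1..<m+1])) = card {l \<in> {1..m}. P (x l)}"
proof -
  have "length (filter P (map x [1..<m+1])) = length (filter (P \<circ> x) [1..<m+1])"
    by (simp only: filter_map length_map)
  also have "\<dots> = card (set (filter (P \<circ> x) [1..<m+1]))"
    by (simp only: distinct_card distinct_filter distinct_upt)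
  also have "set (filter (P \<circ> x) [1..<m+1]) = {l \<in> {1..m}. P (x l)}"
    by auto
  finally show ?thesis .
qed

lemma pord_le_iff_count_le:
  assumes "1 \<le> k" and "k \<le> m"
  shows "pord x m k \<le> t \<longleftrightarrow> k \<le> count_le x m t"
proof -
  have "pord x m k \<le> t \<longleftrightarrow> k - 1 < length (filter (\<lambda>v. v \<le> t) (sort (map x [1..<m+1])))"
    unfolding pord_def using assms by (intro sorted_nth_le_iff_less_length_filter) auto
  also have "length (filter (\<lambda>v. v \<le> t) (sort (map x [1..<m+1]))) = count_le x m t"
    by (simp only: filter_sort length_sort length_filter_map_upt count_le_def)
  finally show ?thesis
    using assms by linarith
qed

lemma bh_R_eq_Max_count_le:
  "bh_R x m q = Max ({0} \<union> {k \<in> {1..m}. k \<le> count_le x m (real k * q / m0_tilde x m)})"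
  unfolding bh_R_def by (intro arg_cong[where f = Max]) (auto simp: pord_le_iff_count_le)

definition valid_pvals :: "nat \<Rightarrow> (nat \<Rightarrow> real) \<Rightarrow> bool" where
  "valid_pvals m x \<longleftrightarrow> (\<forall>l \<in> {1..m}. x l \<in> {0..<1})"

text \<open>\<open>-ln (1 - U)\<close> is Exp(1)-distributed for uniform \<open>U\<close>. The \<open>max\<close> only matters outside \<open>[0, 1)\<close>,
  where it keeps the function nonnegative.\<close>
definition exp_quantile :: "real \<Rightarrow> real" where
  "exp_quantile u = max 0 (- ln (1 - u))"

text \<open>On valid p-values, \<open>m0_tilde_loo x m i = 2 - (\<Sum>l \<in> {1..m} - {i}. ln (1 - x l))\<close>.\<close>
definition m0_tilde_loo :: "(nat \<Rightarrow> real) \<Rightarrow> nat \<Rightarrow> nat \<Rightarrow> real" where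
  "m0_tilde_loo x m i = 2 + (\<Sum>l \<in> {1..m} - {i}. exp_quantile (x l))"

lemma exp_quantile_measurable [measurable]: "exp_quantile \<in> borel_measurable borel"
  unfolding exp_quantile_def by measurable

lemma exp_quantile_nonneg: "0 \<le> exp_quantile u"
  by (simp add: exp_quantile_def)

lemma exp_quantile_mono: "u \<le> v \<Longrightarrow> v < 1 \<Longrightarrow> exp_quantile u \<le> exp_quantile v"
  unfolding exp_quantile_def by (intro max.mono le_imp_neg_le ln_mono) auto

lemma exp_quantile_eq_neg_ln: "0 \<le> u \<Longrightarrow> u < 1 \<Longrightarrow> exp_quantile u = - ln (1 - u)"
  by (simp add: exp_quantile_def)

lemma m0_tilde_eq_sum_exp_quantile:
  "valid_pvals m x \<Longrightarrow> m0_tilde x m = 2 + (\<Sum>l = 1..m. exp_quantile (x l))"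
  unfolding m0_tilde_def valid_pvals_def by (simp add: exp_quantile_eq_neg_ln sum_negf)

lemma m0_tilde_loo_ge_two: "2 \<le> m0_tilde_loo x m i"
  unfolding m0_tilde_loo_def by (simp add: sum_nonneg exp_quantile_nonneg)

lemma m0_tilde_loo_le_m0_tilde:
  assumes "valid_pvals m x" and "i \<in> {1..m}"
  shows "m0_tilde_loo x m i \<le> m0_tilde x m"
  using assms exp_quantile_nonneg[of "x i"]
  by (simp add: m0_tilde_eq_sum_exp_quantile m0_tilde_loo_def sum.remove)

lemma m0_tilde_loo_ge_two_plus_sum:
  assumes "K \<subseteq> {1..m} - {i}"
  shows "2 + (\<Sum>j \<in> K. exp_quantile (x j)) \<le> m0_tilde_loo x m i"
  unfolding m0_tilde_loo_def using assms by (simp add: sum_mono2 exp_quantile_nonneg)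

lemma m0_tilde_loo_fun_upd: "m0_tilde_loo (x(i := u)) m i = m0_tilde_loo x m i"
  unfolding m0_tilde_loo_def by (intro arg_cong[where f = "(+) 2"] sum.cong) auto

lemma m0_tilde_mono:
  assumes "valid_pvals m x" and "\<And>l. l \<in> {1..m} \<Longrightarrow> x l \<le> x' l \<and> x' l < 1"
  shows "m0_tilde x m \<le> m0_tilde x' m"
proof -
  have "valid_pvals m x'"
    using assms by (force simp: valid_pvals_def)
  moreover have "(\<Sum>l = 1..m. exp_quantile (x l)) \<le> (\<Sum>l = 1..m. exp_quantile (x' l))"
    using assms(2) by (intro sum_mono exp_quantile_mono) auto
  ultimately show ?thesis
    using assms(1) by (simp add: m0_tilde_eq_sum_exp_quantile)
qed

lemma bh_R_antimono:
  assumes "valid_pvals m x" and "\<And>l. l \<in> {1..m} \<Longrightarrow> x l \<le> x' l \<and> x' l < 1" and "0 \<le> q"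
  shows "bh_R x' m q \<le> bh_R x m q"
proof -
  have m0: "2 \<le> m0_tilde x m" "m0_tilde x m \<le> m0_tilde x' m"
    using assms m0_tilde_mono by (auto simp: m0_tilde_eq_sum_exp_quantile sum_nonneg exp_quantile_nonneg)
  have "count_le x' m (real k * q / m0_tilde x' m) \<le> count_le x m (real k * q / m0_tilde x m)" for k
  proof -
    have "real k * q / m0_tilde x' m \<le> real k * q / m0_tilde x m"
      using m0 assms(3) by (intro divide_left_mono) auto
    then have "{l \<in> {1..m}. x' l \<le> real k * q / m0_tilde x' m} \<subseteq> {l \<in> {1..m}. x l \<le> real k * q / m0_tilde x m}"
      using assms(2) by force
    then show ?thesis
      unfolding count_le_def by (intro card_mono) auto
  qed
  then show ?thesis
    unfolding bh_R_eq_Max_count_le by (intro Max_mono) (auto intro: le_trans)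
qed

section \<open>Bounding the FDP by per-null terms\<close>

lemma bh_R_pos_imp:
  assumes "0 < bh_R x m q"
  shows "bh_R x m q \<in> {1..m}" and "pord x m (bh_R x m q) \<le> real (bh_R x m q) * q / m0_tilde x m"
proof -
  have "bh_R x m q \<in> {0} \<union> {i \<in> {1..m}. pord x m i \<le> real i * q / m0_tilde x m}"
    unfolding bh_R_def by (intro Max_in) auto
  then show "bh_R x m q \<in> {1..m}" and "pord x m (bh_R x m q) \<le> real (bh_R x m q) * q / m0_tilde x m"
    using assms by auto
qed

text \<open>A bound on the contribution of the true null \<open>i\<close> to the FDP in which the estimator is
  replaced by its leave-one-out version, which does not depend on \<open>x i\<close>.\<close>
definition fdp_share :: "(nat \<Rightarrow> real) \<Rightarrow> nat \<Rightarrow> real \<Rightarrow> nat \<Rightarrow> real" where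
  "fdp_share x m q i =
     (if valid_pvals m x \<and> x i \<le> q / m0_tilde_loo x m i * real (bh_R x m q)
      then 1 / real (max (bh_R x m q) 1) else 0)"

lemma fdp_share_nonneg: "0 \<le> fdp_share x m q i"
  by (simp add: fdp_share_def)

lemma fdp_le_sum_fdp_share:
  assumes x: "valid_pvals m x" and N: "N \<subseteq> {1..m}" and q: "0 \<le> q"
  shows "fdp x m N q \<le> (\<Sum>i \<in> N. fdp_share x m q i)"
proof (cases "bh_R x m q = 0")
  case True
  then show ?thesis
    by (simp add: fdp_def bh_rejected_def sum_nonneg fdp_share_nonneg)
next
  case False
  define R where "R = bh_R x m q"
  have R: "R \<in> {1..m}" "pord x m R \<le> real R * q / m0_tilde x m"
    using bh_R_pos_imp False unfolding R_def by auto
  have finite_N: "finite N"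
    using N finite_subset by blast
  have rejected: "bh_rejected x m q \<inter> N \<subseteq> {i \<in> N. fdp_share x m q i = 1 / real R}"
  proof
    fix i assume i: "i \<in> bh_rejected x m q \<inter> N"
    have "x i \<le> pord x m R"
      using i by (simp add: bh_rejected_def R_def)
    also have "\<dots> \<le> q / m0_tilde x m * real R"
      using R(2) by (simp add: mult.commute)
    also have "\<dots> \<le> q / m0_tilde_loo x m i * real R"
    proof -
      have "2 \<le> m0_tilde_loo x m i" "m0_tilde_loo x m i \<le> m0_tilde x m"
        using m0_tilde_loo_ge_two m0_tilde_loo_le_m0_tilde[OF x] i N by auto
      then show ?thesis
        using q by (intro mult_right_mono divide_left_mono mult_pos_pos) auto
    qed
    finally show "i \<in> {i \<in> N. fdp_share x m q i = 1 / real R}"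
      using i x R(1) by (simp add: fdp_share_def R_def)
  qed
  have "fdp x m N q = real (card (bh_rejected x m q \<inter> N)) / real R"
    unfolding fdp_def using R(1) by (simp add: R_def)
  also have "\<dots> \<le> real (card {i \<in> N. fdp_share x m q i = 1 / real R}) / real R"
    using rejected finite_N by (intro divide_right_mono) (auto intro: card_mono)
  also have "\<dots> = (\<Sum>i \<in> {i \<in> N. fdp_share x m q i = 1 / real R}. fdp_share x m q i)"
    by simp
  also have "\<dots> \<le> (\<Sum>i \<in> N. fdp_share x m q i)"
    using finite_N by (intro sum_mono2) (auto simp: fdp_share_nonneg)
  finally show ?thesis .
qed

lemma fdp_share_restrict:
  assumes "i \<in> {1..m}"
  shows "fdp_share (restrict x {1..m}) m q i = fdp_share x m q i"
proof -
  have "map (restrict x {1..m}) [1..<m+1] = map x [1..<m+1]"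
    by (intro map_cong) auto
  moreover have "m0_tilde (restrict x {1..m}) m = m0_tilde x m"
    by (simp add: m0_tilde_def)
  ultimately have "bh_R (restrict x {1..m}) m q = bh_R x m q"
    unfolding bh_R_def pord_def by (simp only:)
  moreover have "m0_tilde_loo (restrict x {1..m}) m i = m0_tilde_loo x m i"
    by (simp add: m0_tilde_loo_def)
  moreover have "valid_pvals m (restrict x {1..m}) = valid_pvals m x"
    by (simp add: valid_pvals_def)
  ultimately show ?thesis
    using assms by (simp add: fdp_share_def)
qed

lemma ennreal_fdp_le_sum_fdp_share_restrict:
  assumes "valid_pvals m x" and "N \<subseteq> {1..m}" and "0 \<le> q"
  shows "ennreal (fdp x m N q) \<le> (\<Sum>i \<in> N. ennreal (fdp_share (restrict x {1..m}) m q i))"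
proof -
  have "fdp x m N q \<le> (\<Sum>i \<in> N. fdp_share x m q i)"
    using assms by (rule fdp_le_sum_fdp_share)
  also have "\<dots> = (\<Sum>i \<in> N. fdp_share (restrict x {1..m}) m q i)"
    using assms(2) by (intro sum.cong refl fdp_share_restrict[symmetric]) auto
  finally show ?thesis
    by (simp add: ennreal_leI sum_ennreal fdp_share_nonneg)
qed

lemma real_count_le_eq_sum: "real (count_le x m t) = (\<Sum>l = 1..m. if x l \<le> t then 1 else 0)"
  unfolding count_le_def by (simp add: sum.If_cases Int_def)

lemma m0_tilde_measurable [measurable]:
  "(\<lambda>x. m0_tilde x m) \<in> borel_measurable (PiM {1..m} (\<lambda>_. borel))"
  unfolding m0_tilde_def by measurable

lemma m0_tilde_loo_measurable [measurable]:
  "(\<lambda>x. m0_tilde_loo x m i) \<in> borel_measurable (PiM {1..m} (\<lambda>_. borel))"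
  unfolding m0_tilde_loo_def by measurable

lemma valid_pvals_measurable [measurable]: "Measurable.pred (PiM {1..m} (\<lambda>_. borel)) (valid_pvals m)"
  unfolding valid_pvals_def by measurable

lemma bh_R_measurable [measurable]:
  "(\<lambda>x. bh_R x m q) \<in> measurable (PiM {1..m} (\<lambda>_. borel)) (count_space UNIV)"
proof -
  have "bh_R x m q = Max {k. k = 0 \<or> (1 \<le> k \<and> k \<le> m \<and>
      real k \<le> (\<Sum>l = 1..m. if x l \<le> real k * q / m0_tilde x m then 1 else 0))}" for x
    unfolding bh_R_eq_Max_count_le real_count_le_eq_sum[symmetric] by (intro arg_cong[where f = Max]) auto
  then show ?thesis
    by (simp only:) measurable
qed

lemma fdp_share_measurable:
  assumes "i \<in> {1..m}" and sets_eq: "\<And>l. sets (\<mu> l) = sets borel"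
  shows "(\<lambda>x. fdp_share x m q i) \<in> borel_measurable (PiM {1..m} \<mu>)"
proof -
  have sets_PiM_eq: "sets (PiM {1..m} \<mu>) = sets (PiM {1..m} (\<lambda>_. borel))"
    using sets_eq by (intro sets_PiM_cong) auto
  have [measurable]: "(\<lambda>x. real (bh_R x m q)) \<in> borel_measurable (PiM {1..m} (\<lambda>_. borel))"
    using measurable_compose[OF bh_R_measurable, of real borel] by simp
  have [measurable]: "(\<lambda>x. x i) \<in> borel_measurable (PiM {1..m} (\<lambda>_. borel))"
    using assms(1) by (rule measurable_component_singleton)
  have "Measurable.pred (PiM {1..m} (\<lambda>_. borel)) (\<lambda>x. x i \<le> q / m0_tilde_loo x m i * real (bh_R x m q))"
    unfolding pred_def by (intro borel_measurable_le) measurable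
  then show ?thesis
    unfolding measurable_cong_sets[OF sets_PiM_eq refl] fdp_share_def of_nat_max by measurable
qed

lemma sum_fdp_share_measurable:
  assumes "N \<subseteq> {1..m}" and "\<And>l. sets (\<mu> l) = sets borel"
  shows "(\<lambda>x. \<Sum>i \<in> N. ennreal (fdp_share x m q i)) \<in> borel_measurable (PiM {1..m} \<mu>)"
  using assms fdp_share_measurable[of _ m \<mu> q] by (intro borel_measurable_sum) auto

lemma measurable_component_PiM_borel:
  assumes "j \<in> J" and "sets (\<mu> j) = sets borel"
  shows "(\<lambda>y. y j) \<in> borel_measurable (PiM J \<mu>)"
  using measurable_component_singleton[OF assms(1), of \<mu>] unfolding measurable_cong_sets[OF refl assms(2)] .

section \<open>Integrating out one null p-value\<close>

lemma le_mult_of_antimono: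
  fixes R :: "real \<Rightarrow> nat"
  assumes "0 \<le> c" and antimono: "\<And>u v. 0 \<le> u \<Longrightarrow> u \<le> v \<Longrightarrow> v < 1 \<Longrightarrow> R v \<le> R u"
    and "u \<in> {0..<1}" "u \<le> c * real (R u)" and "v \<in> {0..<1}" "v \<le> c * real (R v)"
  shows "v \<le> c * real (R u)"
proof (cases "u \<le> v")
  case True
  then have "c * real (R v) \<le> c * real (R u)"
    using assms by (intro mult_left_mono) auto
  with assms show ?thesis
    by linarith
next
  case False
  with assms show ?thesis
    by linarith
qed

lemma emeasure_uniform_Icc_le:
  assumes "0 \<le> a"
  shows "emeasure (uniform_measure lborel {0..1::real}) {0..a} \<le> ennreal a"
proof -
  have "emeasure (uniform_measure lborel {0..1::real}) {0..a} = emeasure lborel ({0..1} \<inter> {0..a})"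
    by (simp add: divide_ennreal_def)
  also have "\<dots> \<le> emeasure lborel {0..a}"
    by (intro emeasure_mono) auto
  finally show ?thesis
    using assms by simp
qed

lemma nn_integral_uniform_step_up_le:
  fixes R :: "real \<Rightarrow> nat" and c :: real
  assumes c: "0 \<le> c" and antimono: "\<And>u v. 0 \<le> u \<Longrightarrow> u \<le> v \<Longrightarrow> v < 1 \<Longrightarrow> R v \<le> R u"
  shows "(\<integral>\<^sup>+u. ennreal (indicator {u \<in> {0..<1}. u \<le> c * real (R u)} u / real (max (R u) 1))
           \<partial>uniform_measure lborel {0..1}) \<le> ennreal c"
proof (cases "{u \<in> {0..<1}. u \<le> c * real (R u)} = {}")
  case True
  then show ?thesis
    by simp
next
  case False
  define S where "S = {u \<in> {0..<1}. u \<le> c * real (R u)}"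
  obtain u0 where "u0 \<in> S" and R_min: "\<And>u. u \<in> S \<Longrightarrow> R u0 \<le> R u"
    using False ex_has_least_nat[of "\<lambda>u. u \<in> S" _ R] unfolding S_def by blast
  define r where "r = real (max (R u0) 1)"
  have r: "1 \<le> r" "c * real (R u0) \<le> c * r"
    using c by (auto simp: r_def intro: mult_left_mono)
  have S_sub: "S \<subseteq> {0..c * r}"
    using le_mult_of_antimono[OF c antimono] \<open>u0 \<in> S\<close> r(2) by (fastforce simp: S_def)
  have "ennreal (indicator S u / real (max (R u) 1)) \<le> ennreal (1 / r) * indicator {0..c * r} u" for u
  proof (cases "u \<in> S")
    case True
    have "1 / real (max (R u) 1) \<le> 1 / r"
      using R_min[OF True] by (auto simp: r_def intro!: divide_left_mono)
    with True S_sub show ?thesis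
      by (auto simp: ennreal_leI)
  qed simp
  then have "(\<integral>\<^sup>+u. ennreal (indicator S u / real (max (R u) 1)) \<partial>uniform_measure lborel {0..1})
      \<le> (\<integral>\<^sup>+u. ennreal (1 / r) * indicator {0..c * r} u \<partial>uniform_measure lborel {0..1})"
    by (intro nn_integral_mono) auto
  also have "\<dots> = ennreal (1 / r) * emeasure (uniform_measure lborel {0..1}) {0..c * r}"
    by (simp add: nn_integral_cmult_indicator)
  also have "\<dots> \<le> ennreal (1 / r) * ennreal (c * r)"
    using c r by (intro mult_left_mono emeasure_uniform_Icc_le) auto
  also have "\<dots> = ennreal c"
    using r c by (simp add: ennreal_mult[symmetric])
  finally show ?thesis
    by (simp add: S_def)
qed

lemma nn_integral_fdp_share_fun_upd_le:
  assumes i: "i \<in> {1..m}" and q: "0 \<le> q"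
  shows "(\<integral>\<^sup>+u. ennreal (fdp_share (y(i := u)) m q i) \<partial>uniform_measure lborel {0..1})
           \<le> ennreal (q / m0_tilde_loo y m i)"
proof (cases "valid_pvals m (y(i := 0))")
  case True
  define c where "c = q / m0_tilde_loo y m i"
  define R where "R u = bh_R (y(i := u)) m q" for u
  have y_valid: "y l \<in> {0..<1}" if "l \<in> {1..m}" "l \<noteq> i" for l
  proof -
    have "(y(i := 0)) l \<in> {0..<1}"
      using True that(1) unfolding valid_pvals_def by blast
    with that(2) show ?thesis
      by simp
  qed
  have valid_iff: "valid_pvals m (y(i := u)) \<longleftrightarrow> u \<in> {0..<1}" for u
    using y_valid i by (auto simp: valid_pvals_def)
  have "fdp_share (y(i := u)) m q i = indicator {u \<in> {0..<1}. u \<le> c * real (R u)} u / real (max (R u) 1)" for u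
    unfolding fdp_share_def c_def R_def m0_tilde_loo_fun_upd valid_iff by (simp add: indicator_def)
  moreover have "(\<integral>\<^sup>+u. ennreal (indicator {u \<in> {0..<1}. u \<le> c * real (R u)} u / real (max (R u) 1))
      \<partial>uniform_measure lborel {0..1}) \<le> ennreal c"
  proof (rule nn_integral_uniform_step_up_le)
    show "0 \<le> c"
      using q m0_tilde_loo_ge_two[of y m i] by (simp add: c_def)
    fix u v :: real assume uv: "0 \<le> u" "u \<le> v" "v < 1"
    have "bh_R (y(i := u, i := v)) m q \<le> bh_R (y(i := u)) m q"
      using uv q y_valid by (intro bh_R_antimono) (auto simp: valid_iff)
    then show "R v \<le> R u"
      by (simp add: R_def)
  qed
  ultimately show ?thesis
    by (simp add: c_def)
next
  case False
  then have "\<not> valid_pvals m (y(i := u))" for u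
    unfolding valid_pvals_def by (metis atLeastLessThan_iff fun_upd_apply order_refl zero_less_one)
  then have "fdp_share (y(i := u)) m q i = 0" for u
    by (simp add: fdp_share_def)
  then show ?thesis
    by simp
qed

lemma nn_integral_PiM_fdp_share_le_m0_tilde_loo:
  fixes \<mu> :: "nat \<Rightarrow> real measure"
  assumes i: "i \<in> {1..m}" and q: "0 \<le> q"
    and prob: "\<And>l. prob_space (\<mu> l)" and sets_eq: "\<And>l. sets (\<mu> l) = sets borel"
    and unif: "\<mu> i = uniform_measure lborel {0..1}"
  shows "(\<integral>\<^sup>+x. ennreal (fdp_share x m q i) \<partial>PiM {1..m} \<mu>)
           \<le> (\<integral>\<^sup>+y. ennreal (q / m0_tilde_loo y m i) \<partial>PiM ({1..m} - {i}) \<mu>)"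
proof -
  interpret product_sigma_finite \<mu>
    by (simp add: product_sigma_finite_def prob prob_space_imp_sigma_finite)
  have insert_eq: "insert i ({1..m} - {i}) = {1..m}"
    using i by auto
  have "(\<lambda>x. ennreal (fdp_share x m q i)) \<in> borel_measurable (PiM (insert i ({1..m} - {i})) \<mu>)"
    unfolding insert_eq using fdp_share_measurable[OF i sets_eq] by measurable
  from product_nn_integral_insert[OF _ _ this]
  have "(\<integral>\<^sup>+x. ennreal (fdp_share x m q i) \<partial>PiM {1..m} \<mu>)
      = (\<integral>\<^sup>+y. (\<integral>\<^sup>+u. ennreal (fdp_share (y(i := u)) m q i) \<partial>\<mu> i) \<partial>PiM ({1..m} - {i}) \<mu>)"
    unfolding insert_eq by simp
  also have "\<dots> \<le> (\<integral>\<^sup>+y. ennreal (q / m0_tilde_loo y m i) \<partial>PiM ({1..m} - {i}) \<mu>)"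
    unfolding unif by (intro nn_integral_mono nn_integral_fdp_share_fun_upd_le[OF i q])
  finally show ?thesis .
qed

section \<open>Laplace transforms of exponential scores\<close>

lemma nn_integral_exp_neg_mult_Ici:
  fixes a :: real
  assumes a: "0 < a"
  shows "(\<integral>\<^sup>+t. ennreal (exp (- (t * a))) * indicator {0..} t \<partial>lborel) = ennreal (1 / a)"
proof -
  have "(\<integral>\<^sup>+t. ennreal (exp (- (t * a))) * indicator {0..} t \<partial>lborel) = ennreal (0 - (- exp (- (0 * a)) / a))"
  proof (rule nn_integral_FTC_atLeast)
    show "DERIV (\<lambda>t. - exp (- (t * a)) / a) x :> exp (- (x * a))" for x
      using a by (auto intro!: derivative_eq_intros simp: field_simps)
    show "((\<lambda>t. - exp (- (t * a)) / a) \<longlongrightarrow> 0) at_top"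
      using a by real_asymp
  qed auto
  then show ?thesis
    by simp
qed

lemma DERIV_neg_inverse_power:
  fixes x :: real
  assumes "0 < 1 + x"
  shows "DERIV (\<lambda>t. - inverse ((real k + 1) * (1 + t) ^ (k + 1))) x :> 1 / (1 + x) ^ (k + 2)"
proof -
  have "DERIV (\<lambda>t. 1 + t) x :> 1"
    by (intro derivative_eq_intros) auto
  from DERIV_cmult[OF DERIV_power[OF this, of "k + 1"], of "real k + 1"]
  have "DERIV (\<lambda>t. (real k + 1) * (1 + t) ^ (k + 1)) x :> (real k + 1) * (real (k + 1) * (1 * (1 + x) ^ k))"
    by simp
  from DERIV_minus[OF DERIV_inverse_fun[OF this]]
  have "DERIV (\<lambda>t. - inverse ((real k + 1) * (1 + t) ^ (k + 1))) x
      :> (real k + 1) * (real (k + 1) * (1 * (1 + x) ^ k)) * inverse (((real k + 1) * (1 + x) ^ (k + 1)) ^ 2)"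
    using assms by (simp add: numeral_2_eq_2)
  also have "(real k + 1) * (real (k + 1) * (1 * (1 + x) ^ k)) * inverse (((real k + 1) * (1 + x) ^ (k + 1)) ^ 2)
      = 1 / (1 + x) ^ (k + 2)"
  proof -
    define a where "a = real k + 1"
    define y where "y = 1 + x"
    define z where "z = (1 + x) ^ k"
    have "(1 + x) ^ (k + 1) = y * z" "(1 + x) ^ (k + 2) = y * y * z" "real (k + 1) = a"
      by (simp_all add: a_def y_def z_def)
    moreover have "0 < a" "0 < y" "0 < z"
      using assms by (simp_all add: a_def y_def z_def)
    ultimately show ?thesis
      unfolding a_def[symmetric] z_def[symmetric] by (simp add: field_simps power2_eq_square)
  qed
  finally show ?thesis .
qed

lemma nn_integral_inverse_power_Ici:
  "(\<integral>\<^sup>+t. ennreal (1 / (1 + t) ^ (k + 2)) * indicator {0..} t \<partial>lborel) = ennreal (1 / (real k + 1))"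
proof -
  have "(\<integral>\<^sup>+t. ennreal (1 / (1 + t) ^ (k + 2)) * indicator {0..} t \<partial>lborel)
      = ennreal (0 - (- inverse ((real k + 1) * (1 + 0) ^ (k + 1))))"
  proof (rule nn_integral_FTC_atLeast)
    fix x :: real assume "0 \<le> x"
    then show "DERIV (\<lambda>t. - inverse ((real k + 1) * (1 + t) ^ (k + 1))) x :> 1 / (1 + x) ^ (k + 2)"
      by (intro DERIV_neg_inverse_power) simp
  next
    show "((\<lambda>t::real. - inverse ((real k + 1) * (1 + t) ^ (k + 1))) \<longlongrightarrow> 0) at_top"
      by real_asymp
  qed auto
  then show ?thesis
    by (simp add: inverse_eq_divide)
qed

lemma nn_integral_uniform_exp_neg_exp_quantile:
  assumes t: "0 \<le> t"
  shows "(\<integral>\<^sup>+u. ennreal (exp (- (t * exp_quantile u))) \<partial>uniform_measure lborel {0..1}) = ennreal (1 / (1 + t))"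
proof -
  let ?F = "\<lambda>u::real. - ((1 - u) powr (t + 1)) / (t + 1)"
  have "((\<lambda>u. exp (- (t * exp_quantile u))) has_integral (?F 1 - ?F 0)) {0..1}"
  proof (rule fundamental_theorem_of_calculus_interior)
    show "continuous_on {0..1} ?F"
      using t by (intro continuous_intros continuous_on_powr') auto
    fix x :: real assume x: "x \<in> {0<..<1}"
    have "DERIV (\<lambda>u. (1 - u) powr (t + 1)) x :> (t + 1) * (1 - x) powr (t + 1 - 1) * (-1)"
      using x by (intro DERIV_chain2[OF has_real_derivative_powr]) (auto intro!: derivative_eq_intros)
    from DERIV_cdivide[OF DERIV_minus[OF this], of "t + 1"]
    have "(?F has_real_derivative (1 - x) powr t) (at x)"
      using t by simp
    moreover have "exp (- (t * exp_quantile x)) = (1 - x) powr t"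
      using x by (simp add: exp_quantile_def powr_def)
    ultimately show "(?F has_vector_derivative exp (- (t * exp_quantile x))) (at x)"
      by (simp add: has_real_derivative_iff_has_vector_derivative)
  qed auto
  then have "((\<lambda>u. exp (- (t * exp_quantile u))) has_integral 1 / (1 + t)) {0..1}"
    using t by (simp add: add.commute)
  then have "(\<integral>\<^sup>+u. ennreal (indicator {0..1} u * exp (- (t * exp_quantile u))) \<partial>lborel) = ennreal (1 / (1 + t))"
    by (rule nn_integral_has_integral_lebesgue[rotated]) simp
  moreover have "(\<integral>\<^sup>+u. ennreal (exp (- (t * exp_quantile u))) \<partial>uniform_measure lborel {0..1})
      = (\<integral>\<^sup>+u. ennreal (exp (- (t * exp_quantile u))) * indicator {0..1} u \<partial>lborel)"
    by (subst nn_integral_uniform_measure) (auto simp: exp_quantile_def divide_ennreal_def)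
  ultimately show ?thesis
    by (simp add: indicator_mult_ennreal mult.commute)
qed

lemma nn_integral_PiM_exp_neg_sum_exp_quantile:
  fixes \<mu> :: "'i \<Rightarrow> real measure"
  assumes J: "finite J" "K \<subseteq> J" and prob: "\<And>j. prob_space (\<mu> j)"
    and unif: "\<And>j. j \<in> K \<Longrightarrow> \<mu> j = uniform_measure lborel {0..1}" and t: "0 \<le> t"
  shows "(\<integral>\<^sup>+y. ennreal (exp (- (t * (\<Sum>j \<in> K. exp_quantile (y j))))) \<partial>PiM J \<mu>)
           = ennreal (1 / (1 + t)) ^ card K"
proof -
  interpret product_sigma_finite \<mu>
    by (simp add: product_sigma_finite_def prob prob_space_imp_sigma_finite)
  define h where "h j u = (if j \<in> K then ennreal (exp (- (t * exp_quantile u))) else 1)" for j u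
  have "ennreal (exp (- (t * (\<Sum>j \<in> K. exp_quantile (y j))))) = (\<Prod>j \<in> J. h j (y j))" for y
  proof -
    have "exp (- (t * (\<Sum>j \<in> K. exp_quantile (y j)))) = (\<Prod>j \<in> K. exp (- (t * exp_quantile (y j))))"
      by (simp add: exp_sum sum_distrib_left sum_negf[symmetric] finite_subset[OF J(2,1)])
    then show ?thesis
      using J by (simp add: h_def prod.If_cases Int_absorb1 prod_ennreal)
  qed
  moreover have "h j \<in> borel_measurable (\<mu> j)" for j
  proof (cases "j \<in> K")
    case True
    then have sets_eq: "sets (\<mu> j) = sets borel"
      by (simp add: unif)
    have "(\<lambda>u. ennreal (exp (- (t * exp_quantile u)))) \<in> borel_measurable borel"
      by (simp add: exp_quantile_def)
    then show ?thesis
      using True unfolding h_def[abs_def] measurable_cong_sets[OF sets_eq refl] by simp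
  qed (simp add: h_def[abs_def])
  moreover have "integral\<^sup>N (\<mu> j) (h j) = (if j \<in> K then ennreal (1 / (1 + t)) else 1)" for j
    using nn_integral_uniform_exp_neg_exp_quantile[OF t] prob_space.emeasure_space_1[OF prob[of j]]
    by (cases "j \<in> K") (simp_all add: h_def[abs_def] unif)
  ultimately show ?thesis
    using J by (simp add: product_nn_integral_prod prod.If_cases Int_absorb1)
qed

lemma exp_neg_two_mult_le_inverse_square:
  fixes t :: real
  assumes "0 \<le> t"
  shows "exp (- (2 * t)) \<le> 1 / (1 + t) ^ 2"
proof -
  have "(1 + t) ^ 2 \<le> exp t ^ 2"
    using assms by (intro power_mono exp_ge_add_one_self) auto
  then show ?thesis
    using assms by (simp add: exp_minus field_simps exp_double[symmetric] mult.commute)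
qed

text \<open>With \<open>1 / a = \<integral>\<^sub>0\<^sup>\<infinity> exp (- t a) dt\<close>, the mean of \<open>1 / (2 + G)\<close> for a Gamma(k) variable \<open>G\<close>
  becomes the integral of \<open>exp (-2t)\<close> times the Laplace transform \<open>(1 + t) ^ -k\<close> of \<open>G\<close>.\<close>
lemma nn_integral_PiM_inverse_two_plus_sum_exp_quantile:
  fixes \<mu> :: "'i \<Rightarrow> real measure"
  assumes J: "finite J" "K \<subseteq> J" and prob: "\<And>j. prob_space (\<mu> j)"
    and unif: "\<And>j. j \<in> K \<Longrightarrow> \<mu> j = uniform_measure lborel {0..1}"
  shows "(\<integral>\<^sup>+y. ennreal (1 / (2 + (\<Sum>j \<in> K. exp_quantile (y j)))) \<partial>PiM J \<mu>)
           = (\<integral>\<^sup>+t. ennreal (exp (- (2 * t))) * ennreal (1 / (1 + t)) ^ card K * indicator {0..} t \<partial>lborel)"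
proof -
  interpret product_sigma_finite \<mu>
    by (simp add: product_sigma_finite_def prob prob_space_imp_sigma_finite)
  interpret pair_sigma_finite lborel "PiM J \<mu>"
    by (intro pair_sigma_finite.intro lborel.sigma_finite_measure_axioms
        prob_space_imp_sigma_finite prob_space_PiM prob)
  have [measurable]: "(\<lambda>y. y j) \<in> borel_measurable (PiM J \<mu>)" if "j \<in> K" for j
    using that J(2) unif by (intro measurable_component_PiM_borel) auto
  let ?S = "\<lambda>y. \<Sum>j \<in> K. exp_quantile (y j)"
  let ?f = "\<lambda>t y. ennreal (exp (- (t * (2 + ?S y)))) * indicator {0..} t"
  have "(\<integral>\<^sup>+y. ennreal (1 / (2 + ?S y)) \<partial>PiM J \<mu>) = (\<integral>\<^sup>+y. (\<integral>\<^sup>+t. ?f t y \<partial>lborel) \<partial>PiM J \<mu>)"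
    by (intro nn_integral_cong)
      (simp add: nn_integral_exp_neg_mult_Ici add_pos_nonneg sum_nonneg exp_quantile_nonneg)
  also have "\<dots> = (\<integral>\<^sup>+t. (\<integral>\<^sup>+y. ?f t y \<partial>PiM J \<mu>) \<partial>lborel)"
    by (rule Fubini') measurable
  also have "\<dots> = (\<integral>\<^sup>+t. ennreal (exp (- (2 * t))) * ennreal (1 / (1 + t)) ^ card K * indicator {0..} t \<partial>lborel)"
  proof (rule nn_integral_cong)
    fix t :: real
    show "(\<integral>\<^sup>+y. ?f t y \<partial>PiM J \<mu>) = ennreal (exp (- (2 * t))) * ennreal (1 / (1 + t)) ^ card K * indicator {0..} t"
    proof (cases "0 \<le> t")
      case True
      have "?f t y = ennreal (exp (- (2 * t))) * ennreal (exp (- (t * ?S y)))" for y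
        using True by (simp add: ennreal_mult[symmetric] mult_exp_exp algebra_simps)
      moreover have "(\<lambda>y. ennreal (exp (- (t * ?S y)))) \<in> borel_measurable (PiM J \<mu>)"
        by measurable
      ultimately show ?thesis
        using True by (simp add: nn_integral_cmult nn_integral_PiM_exp_neg_sum_exp_quantile[OF J prob unif])
    qed simp
  qed
  finally show ?thesis .
qed

lemma nn_integral_PiM_inverse_two_plus_sum_exp_quantile_le:
  fixes \<mu> :: "'i \<Rightarrow> real measure"
  assumes J: "finite J" "K \<subseteq> J" and prob: "\<And>j. prob_space (\<mu> j)"
    and unif: "\<And>j. j \<in> K \<Longrightarrow> \<mu> j = uniform_measure lborel {0..1}"
  shows "(\<integral>\<^sup>+y. ennreal (1 / (2 + (\<Sum>j \<in> K. exp_quantile (y j)))) \<partial>PiM J \<mu>)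
           \<le> ennreal (1 / (real (card K) + 1))"
proof -
  have "(\<integral>\<^sup>+t. ennreal (exp (- (2 * t))) * ennreal (1 / (1 + t)) ^ card K * indicator {0..} t \<partial>lborel)
      \<le> (\<integral>\<^sup>+t. ennreal (1 / (1 + t) ^ (card K + 2)) * indicator {0..} t \<partial>lborel)"
  proof (intro nn_integral_mono)
    fix t :: real
    show "ennreal (exp (- (2 * t))) * ennreal (1 / (1 + t)) ^ card K * indicator {0..} t
        \<le> ennreal (1 / (1 + t) ^ (card K + 2)) * indicator {0..} t"
    proof (cases "0 \<le> t")
      case True
      have "exp (- (2 * t)) * (1 / (1 + t)) ^ card K \<le> 1 / (1 + t) ^ 2 * (1 / (1 + t)) ^ card K"
        using True exp_neg_two_mult_le_inverse_square by (intro mult_right_mono) auto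
      also have "\<dots> = 1 / (1 + t) ^ (card K + 2)"
        by (simp add: power_add power_divide power2_eq_square)
      finally show ?thesis
        using True by (simp add: ennreal_mult[symmetric] ennreal_power ennreal_leI)
    qed simp
  qed
  then show ?thesis
    by (simp only: nn_integral_PiM_inverse_two_plus_sum_exp_quantile[OF assms] nn_integral_inverse_power_Ici)
qed

lemma (in prob_space) nn_integral_indep_vars_eq_PiM:
  assumes "I \<noteq> {}" and rv: "\<And>i. i \<in> I \<Longrightarrow> random_variable borel (X i)"
    and indep: "indep_vars (\<lambda>_. borel) X I" and f: "f \<in> borel_measurable (PiM I (\<lambda>_. borel))"
  shows "(\<integral>\<^sup>+\<omega>. f (\<lambda>i \<in> I. X i \<omega>) \<partial>M) = (\<integral>\<^sup>+x. f x \<partial>PiM I (\<lambda>i. distr M borel (X i)))"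
proof -
  have distr_eq: "distr M (PiM I (\<lambda>_. borel)) (\<lambda>\<omega>. \<lambda>i \<in> I. X i \<omega>) = PiM I (\<lambda>i. distr M borel (X i))"
    using indep_vars_iff_distr_eq_PiM'[OF assms(1) rv] indep by simp
  have "(\<lambda>\<omega>. \<lambda>i \<in> I. X i \<omega>) \<in> measurable M (PiM I (\<lambda>_. borel))"
    using rv by measurable
  moreover have "f \<in> borel_measurable (distr M (PiM I (\<lambda>_. borel)) (\<lambda>\<omega>. \<lambda>i \<in> I. X i \<omega>))"
    using f by simp
  ultimately show ?thesis
    unfolding distr_eq[symmetric] by (rule nn_integral_distr[symmetric])
qed

lemma nn_integral_PiM_fdp_share_le:
  fixes \<mu> :: "nat \<Rightarrow> real measure"
  assumes N: "N \<subseteq> {1..m}" and i: "i \<in> N" and q: "0 \<le> q"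
    and prob: "\<And>l. prob_space (\<mu> l)" and sets_eq: "\<And>l. sets (\<mu> l) = sets borel"
    and unif: "\<And>l. l \<in> N \<Longrightarrow> \<mu> l = uniform_measure lborel {0..1}"
  shows "(\<integral>\<^sup>+x. ennreal (fdp_share x m q i) \<partial>PiM {1..m} \<mu>) \<le> ennreal (q / real (card N))"
proof -
  define J where "J = {1..m} - {i}"
  define K where "K = N - {i}"
  have K: "K \<subseteq> J"
    using N by (auto simp: J_def K_def)
  have [measurable]: "(\<lambda>y. y j) \<in> borel_measurable (PiM J \<mu>)" if "j \<in> K" for j
    using that K sets_eq by (intro measurable_component_PiM_borel) auto
  have "(\<integral>\<^sup>+x. ennreal (fdp_share x m q i) \<partial>PiM {1..m} \<mu>) \<le> (\<integral>\<^sup>+y. ennreal (q / m0_tilde_loo y m i) \<partial>PiM J \<mu>)"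
    unfolding J_def using N i q prob sets_eq unif by (intro nn_integral_PiM_fdp_share_le_m0_tilde_loo) auto
  also have "\<dots> \<le> (\<integral>\<^sup>+y. ennreal q * ennreal (1 / (2 + (\<Sum>j \<in> K. exp_quantile (y j)))) \<partial>PiM J \<mu>)"
  proof (rule nn_integral_mono)
    fix y :: "nat \<Rightarrow> real"
    have "0 \<le> (\<Sum>j \<in> K. exp_quantile (y j))"
      by (intro sum_nonneg exp_quantile_nonneg)
    moreover have "2 + (\<Sum>j \<in> K. exp_quantile (y j)) \<le> m0_tilde_loo y m i"
      using K unfolding J_def by (rule m0_tilde_loo_ge_two_plus_sum)
    ultimately show "ennreal (q / m0_tilde_loo y m i) \<le> ennreal q * ennreal (1 / (2 + (\<Sum>j \<in> K. exp_quantile (y j))))"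
      using q by (simp add: ennreal_mult[symmetric] ennreal_leI divide_left_mono)
  qed
  also have "\<dots> = ennreal q * (\<integral>\<^sup>+y. ennreal (1 / (2 + (\<Sum>j \<in> K. exp_quantile (y j)))) \<partial>PiM J \<mu>)"
    by (rule nn_integral_cmult) measurable
  also have "\<dots> \<le> ennreal q * ennreal (1 / (real (card K) + 1))"
    using K by (intro mult_left_mono nn_integral_PiM_inverse_two_plus_sum_exp_quantile_le prob)
      (auto simp: J_def K_def unif)
  also have "real (card K) + 1 = real (card N)"
  proof -
    have "finite N"
      using N finite_subset by blast
    with i have "1 \<le> card N"
      by (metis One_nat_def Suc_leI card_gt_0_iff empty_iff)
    with \<open>finite N\<close> i show ?thesis
      by (simp add: K_def of_nat_diff)
  qed
  finally show ?thesis
    using q by (simp add: ennreal_mult[symmetric])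
qed

lemma nn_integral_PiM_sum_fdp_share_le:
  fixes \<mu> :: "nat \<Rightarrow> real measure"
  assumes N: "N \<subseteq> {1..m}" "N \<noteq> {}" and q: "0 \<le> q"
    and prob: "\<And>l. prob_space (\<mu> l)" and sets_eq: "\<And>l. sets (\<mu> l) = sets borel"
    and unif: "\<And>l. l \<in> N \<Longrightarrow> \<mu> l = uniform_measure lborel {0..1}"
  shows "(\<integral>\<^sup>+x. (\<Sum>i \<in> N. ennreal (fdp_share x m q i)) \<partial>PiM {1..m} \<mu>) \<le> ennreal q"
proof -
  have "(\<integral>\<^sup>+x. (\<Sum>i \<in> N. ennreal (fdp_share x m q i)) \<partial>PiM {1..m} \<mu>)
      = (\<Sum>i \<in> N. \<integral>\<^sup>+x. ennreal (fdp_share x m q i) \<partial>PiM {1..m} \<mu>)"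
    using N fdp_share_measurable[OF _ sets_eq] by (intro nn_integral_sum) auto
  also have "\<dots> \<le> (\<Sum>i \<in> N. ennreal (q / real (card N)))"
    using assms by (intro sum_mono nn_integral_PiM_fdp_share_le) auto
  also have "\<dots> = ennreal q"
    using N finite_subset[OF N(1)] q by (simp add: ennreal_of_nat_eq_real_of_nat ennreal_mult[symmetric])
  finally show ?thesis .
qed

theorem claim1:
  fixes M :: "'a measure" and p :: "nat \<Rightarrow> 'a \<Rightarrow> real"
    and m :: nat and N :: "nat set" and q :: real
  assumes "prob_space M"
    and "m \<ge> 1"
    and "N \<subseteq> {1..m}" and "card N \<ge> 1"
    and "0 < q" and "q \<le> 1"
    and "\<And>i. i \<in> {1..m} \<Longrightarrow> p i \<in> borel_measurable M"
    and "\<And>i \<omega>. i \<in> {1..m} \<Longrightarrow> \<omega> \<in> space M \<Longrightarrow> p i \<omega> \<in> {0..<1}"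
    and "prob_space.indep_vars M (\<lambda>_. borel) p {1..m}"
    and "\<And>i. i \<in> N \<Longrightarrow> distr M borel (p i) = uniform_measure lborel {0..1}"
  shows "(\<integral>\<omega>. fdp (\<lambda>i. p i \<omega>) m N q \<partial>M) \<le> q"
proof -
  interpret prob_space M
    by fact
  \<comment> \<open>Off \<open>{1..m}\<close> any probability measure will do: the product-measure lemmas ask for one at every index.\<close>
  define \<mu> where "\<mu> l = (if l \<in> {1..m} then distr M borel (p l) else uniform_measure lborel {0..1})" for l
  have "(\<integral>\<^sup>+\<omega>. fdp (\<lambda>i. p i \<omega>) m N q \<partial>M)
      \<le> (\<integral>\<^sup>+\<omega>. (\<Sum>i \<in> N. ennreal (fdp_share (\<lambda>l \<in> {1..m}. p l \<omega>) m q i)) \<partial>M)"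
    using assms(3,5,8)
    by (intro nn_integral_mono ennreal_fdp_le_sum_fdp_share_restrict) (auto simp: valid_pvals_def)
  also have "\<dots> = (\<integral>\<^sup>+x. (\<Sum>i \<in> N. ennreal (fdp_share x m q i)) \<partial>PiM {1..m} (\<lambda>l. distr M borel (p l)))"
    using assms(2,3,7,9) by (intro nn_integral_indep_vars_eq_PiM sum_fdp_share_measurable) auto
  also have "PiM {1..m} (\<lambda>l. distr M borel (p l)) = PiM {1..m} \<mu>"
    by (rule PiM_cong) (simp_all add: \<mu>_def)
  also have "(\<integral>\<^sup>+x. (\<Sum>i \<in> N. ennreal (fdp_share x m q i)) \<partial>PiM {1..m} \<mu>) \<le> ennreal q"
  proof (rule nn_integral_PiM_sum_fdp_share_le)
    show "prob_space (\<mu> l)" for l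
      using assms(7) by (simp add: \<mu>_def prob_space_distr prob_space_uniform_measure)
  qed (use assms(3,4,5,10) in \<open>auto simp: \<mu>_def\<close>)
  finally show ?thesis
    using assms(5) by (intro integral_real_bounded) auto
qed

end
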